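(* Let $\mathcal{X},\mathcal{Y}$ be finite sets, $\mathcal{T}=\mathbb{N}$, and let $p(X,Y)\in\Delta_{\mathcal{X}\times\mathcal{Y}}$ with $p(X)$ of full support. Put $\Lambda:=I(X;Y)$ and, for $0\le\lambda\le\Lambda$, $$\mathrm{IB}(\lambda):=\operatorname{argmin}\{\, I_q(X;T) \;:\; q(T|X)\in C(\mathcal{X},\mathcal{T}),\ I_q(T;Y)\ge \lambda\,\}.$$ Then for every $\sigma\in\mathrm{Bij}(\mathcal{X})$: (i) $\mathrm{IB}(\Lambda)=\{\gamma\circ\pi_{\mathcal{X}} : \gamma\in C_{\mathrm{cong}}(\bar{\mathcal{X}},\mathcal{T})\}$; (ii) if $\kappa\in\mathrm{IB}(\Lambda)$, then $\sigma\in G_{\mathrm{ci}}$ if and only if $\kappa\circ\sigma=\kappa$; (iii) if $\sigma\in G_{\mathrm{ci}}$, then $\kappa\circ\sigma=\kappa$ for every $0\le\lambda\le\Lambda$ and every $\kappa\in\mathrm{IB}(\lambda)$; (iv) the partition $\bar{\mathcal{X}}$ coincides with the partition of $\mathcal{X}$ into $G_{\mathrm{ci}}$-orbits, i.e. $\pi_{\mathcal{X}}$ coincides with the projection on orbits $\pi_{\mathrm{ci}}:\mathcal{X}\to\mathcal{X}/G_{\mathrm{ci}}$.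
   Context: All alphabets are finite except $\mathcal{T}=\mathbb{N}$. $\Delta_{\mathcal{A}}$ is the probability simplex on $\mathcal{A}$; $C(\mathcal{A},\mathcal{B})$ is the set of channels (conditional probabilities) $\kappa(b|a)$ from $\mathcal{A}$ to $\mathcal{B}$; functions are viewed as deterministic channels, and $\circ$ denotes channel composition $(\mu\circ\kappa)(c|a)=\sum_b\mu(c|b)\kappa(b|a)$. $\mathrm{Bij}(\mathcal{A})$ is the set of bijections of $\mathcal{A}$ and $e_{\mathcal{A}}$ the identity. A channel $\gamma\in C(\mathcal{A},\mathcal{B})$ is congruent, written $\gamma\in C_{\mathrm{cong}}(\mathcal{A},\mathcal{B})$, if there is a function $f:\mathcal{B}\to\mathcal{A}$ with $f\circ\gamma=e_{\mathcal{A}}$. For $q(T|X)\in C(\mathcal{X},\mathcal{T})$, the joint distribution is $q(x,y,t):=p(x,y)q(t|x)$ (Markov chain $T-X-Y$), and $I_q$ denotes mutual information under it. The channel invariance group $G_{\mathrm{ci}}$ is the group of $\sigma\in\mathrm{Bij}(\mathcal{X})$ with $p(Y|X)\circ\sigma=p(Y|X)$, i.e. $p(Y|\sigma(x))=p(Y|x)$ for all $x$. The equivalence relation $x\sim_{\mathcal{X}}x'\iff p(Y|x)=p(Y|x')$ has partition $\bar{\mathcal{X}}$ and projection $\pi_{\mathcal{X}}:\mathcal{X}\to\bar{\mathcal{X}}$. *)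

theory Defs
  imports "HOL-Probability.Probability_Mass_Function" "HOL-Analysis.Infinite_Sum"
begin

text \<open>Channels from A to B are represented as functions A \<Rightarrow> B pmf
  (a conditional distribution for each input). Channel composition
  (mu o kappa)(c|a) = sum_b mu(c|b) kappa(b|a):\<close>
definition chan_comp :: "('b \<Rightarrow> 'c pmf) \<Rightarrow> ('a \<Rightarrow> 'b pmf) \<Rightarrow> ('a \<Rightarrow> 'c pmf)" where
  "chan_comp \<mu> \<kappa> = (\<lambda>a. bind_pmf (\<kappa> a) \<mu>)"

definition det :: "('a \<Rightarrow> 'b) \<Rightarrow> ('a \<Rightarrow> 'b pmf)" where
  "det f = (\<lambda>a. return_pmf (f a))"

definition congruent_chan :: "'a set \<Rightarrow> ('a \<Rightarrow> 'b pmf) \<Rightarrow> bool" where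
  "congruent_chan A \<gamma> \<longleftrightarrow>
     (\<exists>f. (\<forall>b. f b \<in> A) \<and> (\<forall>a\<in>A. chan_comp (det f) \<gamma> a = det id a))"

definition mutual_info :: "('a \<times> 'b) pmf \<Rightarrow> real" where
  "mutual_info r = infsum (\<lambda>(a,b). pmf r (a,b) *
      ln (pmf r (a,b) / (pmf (map_pmf fst r) a * pmf (map_pmf snd r) b))) UNIV"

definition joint :: "('x \<times> 'y) pmf \<Rightarrow> ('x \<Rightarrow> nat pmf) \<Rightarrow> ('x \<times> 'y \<times> nat) pmf" where
  "joint p q = bind_pmf p (\<lambda>(x,y). map_pmf (\<lambda>t. (x,y,t)) (q x))"

definition I_XT :: "('x \<times> 'y) pmf \<Rightarrow> ('x \<Rightarrow> nat pmf) \<Rightarrow> real" where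
  "I_XT p q = mutual_info (map_pmf (\<lambda>(x,y,t). (x,t)) (joint p q))"

definition I_TY :: "('x \<times> 'y) pmf \<Rightarrow> ('x \<Rightarrow> nat pmf) \<Rightarrow> real" where
  "I_TY p q = mutual_info (map_pmf (\<lambda>(x,y,t). (t,y)) (joint p q))"

definition IB :: "('x \<times> 'y) pmf \<Rightarrow> real \<Rightarrow> ('x \<Rightarrow> nat pmf) set" where
  "IB p lam = {q. I_TY p q \<ge> lam \<and> (\<forall>q'. I_TY p q' \<ge> lam \<longrightarrow> I_XT p q \<le> I_XT p q')}"

definition condY :: "('x \<times> 'y) pmf \<Rightarrow> 'x \<Rightarrow> 'y pmf" where
  "condY p x = map_pmf snd (cond_pmf p {z. fst z = x})"

definition Gci :: "('x \<times> 'y) pmf \<Rightarrow> ('x \<Rightarrow> 'x) set" where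
  "Gci p = {\<sigma>. bij \<sigma> \<and> chan_comp (condY p) (det \<sigma>) = condY p}"

definition piX :: "('x \<times> 'y) pmf \<Rightarrow> 'x \<Rightarrow> 'x set" where
  "piX p x = {x'. condY p x' = condY p x}"

definition Xbar :: "('x \<times> 'y) pmf \<Rightarrow> 'x set set" where
  "Xbar p = range (piX p)"

definition pi_ci :: "('x \<times> 'y) pmf \<Rightarrow> 'x \<Rightarrow> 'x set" where
  "pi_ci p x = {\<sigma> x | \<sigma>. \<sigma> \<in> Gci p}"

end

theory Submission
  imports Defs
begin

text \<open>Replacing a channel \<open>\<kappa>\<close> by its average over each class of \<open>\<sim>\<^sub>\<X>\<close> (weighted by
  \<open>p(x)\<close>) leaves \<open>q(T)\<close> and \<open>q(T, Y)\<close>, hence \<open>I(T; Y)\<close>, unchanged, and by the log-sum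
  inequality does not increase \<open>I(X; T)\<close>, with equality only if \<open>\<kappa>\<close> is already constant on
  classes. So every IB minimiser factors through \<open>\<pi>\<^sub>\<X>\<close>, and is therefore invariant under
  \<open>G\<^sub>c\<^sub>i\<close>. The data processing inequality \<open>I(T; Y) \<le> I(X; Y)\<close>, another log-sum
  inequality, is an equality exactly when inputs in different classes never share an output;
  a class-constant channel with this property has \<open>I(X; T) = H(\<pi>\<^sub>\<X>(X))\<close>. Hence \<open>IB(\<Lambda>)\<close>
  consists of the congruent factorisations through \<open>\<pi>\<^sub>\<X>\<close>; such a channel recognises the
  class of its input from any output, which gives the converse in (ii). Finally, transposing
  two equivalent inputs is in \<open>G\<^sub>c\<^sub>i\<close>, so the classes are the orbits.\<close>

section \<open>Infinite sums and the log-sum inequality\<close>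

lemma pmf_summable_on: "pmf M summable_on A"
  using pmf_abs_summable[of M A] abs_summable_equivalent summable_on_iff_abs_summable_on_real by blast

lemma infsum_pmf_UNIV: "infsum (pmf M) UNIV = 1"
  using infsetsum_pmf_eq_1[of M UNIV] infsetsum_infsum[OF pmf_abs_summable[of M UNIV]] by simp

lemma
  fixes f :: "'i \<Rightarrow> 'a \<Rightarrow> real"
  assumes "finite S" and "\<And>i. i \<in> S \<Longrightarrow> f i summable_on A"
  shows infsum_sum: "infsum (\<lambda>t. \<Sum>i\<in>S. f i t) A = (\<Sum>i\<in>S. infsum (f i) A)"
    and summable_on_sum: "(\<lambda>t. \<Sum>i\<in>S. f i t) summable_on A"
proof -
  have "infsum (\<lambda>t. \<Sum>i\<in>S. f i t) A = (\<Sum>i\<in>S. infsum (f i) A) \<and> (\<lambda>t. \<Sum>i\<in>S. f i t) summable_on A"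
    using assms by (induction S rule: finite_induct) (auto simp: infsum_add summable_on_add)
  then show "infsum (\<lambda>t. \<Sum>i\<in>S. f i t) A = (\<Sum>i\<in>S. infsum (f i) A)"
    and "(\<lambda>t. \<Sum>i\<in>S. f i t) summable_on A" by simp_all
qed

lemma
  fixes f g :: "'a \<Rightarrow> real"
  assumes "f summable_on A" and "g summable_on A"
  shows infsum_diff: "infsum (\<lambda>x. f x - g x) A = infsum f A - infsum g A"
    and summable_on_diff: "(\<lambda>x. f x - g x) summable_on A"
proof -
  have neg: "(\<lambda>x. - g x) summable_on A"
    using assms(2) by (simp add: summable_on_uminus)
  show "infsum (\<lambda>x. f x - g x) A = infsum f A - infsum g A"
    using infsum_add[OF assms(1) neg] infsum_uminus[of g A] by simp
  show "(\<lambda>x. f x - g x) summable_on A"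
    using summable_on_add[OF assms(1) neg] by simp
qed

lemma infsum_nonneg_eq_0_iff:
  fixes f :: "'a \<Rightarrow> real"
  assumes "f summable_on A" and "\<And>x. x \<in> A \<Longrightarrow> 0 \<le> f x"
  shows "infsum f A = 0 \<longleftrightarrow> (\<forall>x\<in>A. f x = 0)"
  using assms nonneg_infsum_le_0D[of f A] infsum_0[of A f] by force

lemma infsum_prod_finite_fst:
  fixes g :: "'a::finite \<Rightarrow> 'b \<Rightarrow> real"
  assumes "\<And>a. g a summable_on UNIV"
  shows "infsum (\<lambda>(a, b). g a b) UNIV = (\<Sum>a\<in>UNIV. infsum (g a) UNIV)"
proof -
  have slice: "infsum (\<lambda>(a, b). g a b) (range (Pair a)) = infsum (g a) UNIV" for a
    by (subst infsum_reindex) (auto simp: inj_on_def o_def)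
  have "(\<lambda>(a, b). g a b) summable_on range (Pair a)" for a
    by (subst summable_on_reindex) (auto simp: inj_on_def o_def assms)
  then have "infsum (\<lambda>(a, b). g a b) (\<Union>a. range (Pair a)) = (\<Sum>a\<in>UNIV. infsum (g a) UNIV)"
    by (subst sum_infsum[symmetric]) (auto simp: slice)
  moreover have "(\<Union>a. range (Pair a)) = (UNIV :: ('a \<times> 'b) set)"
    by auto
  ultimately show ?thesis
    by simp
qed

lemma infsum_prod_finite_snd:
  fixes g :: "'a \<Rightarrow> 'b::finite \<Rightarrow> real"
  assumes "\<And>b. (\<lambda>a. g a b) summable_on UNIV"
  shows "infsum (\<lambda>(a, b). g a b) UNIV = (\<Sum>b\<in>UNIV. infsum (\<lambda>a. g a b) UNIV)"
proof -
  have "infsum (\<lambda>(a, b). g a b) UNIV = infsum ((\<lambda>(b, a). g a b) \<circ> prod.swap) UNIV"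
    by (simp add: case_prod_unfold o_def)
  also have "\<dots> = infsum (\<lambda>(b, a). g a b) UNIV"
    by (subst infsum_reindex[symmetric]) auto
  finally show ?thesis
    using infsum_prod_finite_fst[of "\<lambda>b a. g a b"] assms by simp
qed

lemma abs_mult_ln_div_le:
  fixes u v c :: real
  assumes "0 \<le> u" and "0 \<le> v" and "0 < c" and "u \<le> c * v"
  shows "\<bar>u * ln (u / v)\<bar> \<le> u * \<bar>ln c\<bar> + u + v"
proof (cases "u = 0")
  case False
  with assms have u: "0 < u" and v: "0 < v"
    by (auto simp: order.order_iff_strict)
  have "u * ln (u / v) \<le> u * ln c"
    using u v assms by (intro mult_left_mono) (auto simp: divide_le_eq mult.commute)
  also have "\<dots> \<le> u * \<bar>ln c\<bar>"
    using u by (intro mult_left_mono) auto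
  finally have upper: "u * ln (u / v) \<le> u * \<bar>ln c\<bar>" .
  have "u * (1 - v / u) \<le> u * ln (u / v)"
    using ln_le_minus_one[of "v / u"] u v by (intro mult_left_mono) (auto simp: ln_div)
  then have lower: "u - v \<le> u * ln (u / v)"
    using u by (simp add: algebra_simps)
  have "0 \<le> u * \<bar>ln c\<bar>"
    using u by simp
  then show ?thesis
    unfolding abs_le_iff using upper lower u v by linarith
qed (use assms in simp)

lemma summable_on_mult_ln_div:
  fixes u v :: "'a \<Rightarrow> real"
  assumes "u summable_on A" and "v summable_on A"
    and "\<And>t. 0 \<le> u t" and "\<And>t. 0 \<le> v t" and "0 < c" and "\<And>t. u t \<le> c * v t"
  shows "(\<lambda>t. u t * ln (u t / v t)) summable_on A"
proof -
  have "(\<lambda>t. u t * \<bar>ln c\<bar> + u t + v t) summable_on A"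
    using assms by (intro summable_on_add summable_on_cmult_left) auto
  then have "Infinite_Sum.abs_summable_on (\<lambda>t. u t * ln (u t / v t)) A"
    by (rule Infinite_Sum.abs_summable_on_comparison_test')
       (simp only: real_norm_def, rule abs_mult_ln_div_le[OF assms(3-6)])
  then show ?thesis
    using summable_on_iff_abs_summable_on_real by blast
qed

text \<open>This is \<open>ln z \<le> z - 1\<close> for \<open>z = c b / a\<close>; summing it with \<open>c = \<Sum>a / \<Sum>b\<close> gives the
  log-sum inequality.\<close>
lemma log_sum_gap:
  fixes a b c :: real
  assumes "0 \<le> a" and "0 \<le> b" and "0 < a \<Longrightarrow> 0 < b" and "0 < c"
  shows "0 \<le> a * ln (a / b) - a * ln c - (a - c * b)"
    and "a * ln (a / b) - a * ln c - (a - c * b) = 0 \<longleftrightarrow> a = c * b"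
proof -
  have "0 \<le> a * ln (a / b) - a * ln c - (a - c * b) \<and>
        (a * ln (a / b) - a * ln c - (a - c * b) = 0 \<longleftrightarrow> a = c * b)"
  proof (cases "a = 0")
    case True
    then show ?thesis
      using assms by auto
  next
    case False
    with assms have a: "0 < a" and b: "0 < b"
      by auto
    define z where "z = c * b / a"
    have z: "0 < z"
      using a b assms by (simp add: z_def)
    have gap: "a * ln (a / b) - a * ln c - (a - c * b) = a * ((z - 1) - ln z)"
      using a b assms by (simp add: z_def ln_div ln_mult algebra_simps)
    have "ln z \<le> z - 1"
      using ln_le_minus_one[OF z] .
    moreover have "ln z = z - 1 \<longleftrightarrow> z = 1"
      using ln_eq_minus_one[OF z] by auto
    moreover have "z = 1 \<longleftrightarrow> a = c * b"
      using a by (auto simp: z_def)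
    ultimately show ?thesis
      unfolding gap using a by (auto simp: mult_le_0_iff)
  qed
  then show "0 \<le> a * ln (a / b) - a * ln c - (a - c * b)"
    and "a * ln (a / b) - a * ln c - (a - c * b) = 0 \<longleftrightarrow> a = c * b"
    by simp_all
qed

lemma log_sum:
  fixes a b :: "'i \<Rightarrow> real"
  assumes S: "finite S" and a: "\<And>i. i \<in> S \<Longrightarrow> 0 \<le> a i" and b: "\<And>i. i \<in> S \<Longrightarrow> 0 \<le> b i"
    and supp: "\<And>i. i \<in> S \<Longrightarrow> 0 < a i \<Longrightarrow> 0 < b i"
  shows log_sum_inequality: "sum a S * ln (sum a S / sum b S) \<le> (\<Sum>i\<in>S. a i * ln (a i / b i))"
    and log_sum_eq_iff: "(\<Sum>i\<in>S. a i * ln (a i / b i)) = sum a S * ln (sum a S / sum b S)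
            \<longleftrightarrow> (\<forall>i\<in>S. a i * sum b S = b i * sum a S)"
proof -
  let ?L = "\<Sum>i\<in>S. a i * ln (a i / b i)" and ?A = "sum a S" and ?B = "sum b S"
  have "?A * ln (?A / ?B) \<le> ?L \<and> (?L = ?A * ln (?A / ?B) \<longleftrightarrow> (\<forall>i\<in>S. a i * ?B = b i * ?A))"
  proof (cases "?A = 0")
    case True
    then have "\<forall>i\<in>S. a i = 0"
      using S a by (simp add: sum_nonneg_eq_0_iff)
    then show ?thesis
      using True by simp
  next
    case False
    then obtain j where j: "j \<in> S" "0 < a j"
      using a by (metis order.not_eq_order_implies_strict sum.neutral)
    have A: "0 < ?A"
      using False a by (simp add: order.not_eq_order_implies_strict sum_nonneg)
    have "b j \<le> ?B"
      using S j b by (intro member_le_sum) auto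
    then have B: "0 < ?B"
      using supp[OF j] by simp
    define d where "d i = a i * ln (a i / b i) - a i * ln (?A / ?B) - (a i - ?A / ?B * b i)" for i
    have d: "0 \<le> d i" "d i = 0 \<longleftrightarrow> a i * ?B = b i * ?A" if "i \<in> S" for i
      using log_sum_gap[of "a i" "b i" "?A / ?B"] that a b supp A B
      by (auto simp: d_def field_simps)
    have "sum d S = ?L - ?A * ln (?A / ?B) - (?A - ?A / ?B * ?B)"
      by (simp add: d_def sum_subtractf sum_distrib_left sum_distrib_right)
    then have sum_d: "sum d S = ?L - ?A * ln (?A / ?B)"
      using B by simp
    have "0 \<le> sum d S"
      using d by (simp add: sum_nonneg)
    moreover have "sum d S = 0 \<longleftrightarrow> (\<forall>i\<in>S. a i * ?B = b i * ?A)"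
      using S d by (simp add: sum_nonneg_eq_0_iff)
    ultimately show ?thesis
      unfolding sum_d by auto
  qed
  then show "?A * ln (?A / ?B) \<le> ?L" and "?L = ?A * ln (?A / ?B) \<longleftrightarrow> (\<forall>i\<in>S. a i * ?B = b i * ?A)"
    by simp_all
qed

section \<open>Channels factoring through a map\<close>

definition constant_on_fibres :: "('x \<Rightarrow> 'c) \<Rightarrow> ('x \<Rightarrow> 'b pmf) \<Rightarrow> bool" where
  "constant_on_fibres \<pi> \<kappa> \<longleftrightarrow> (\<forall>x x'. \<pi> x = \<pi> x' \<longrightarrow> \<kappa> x = \<kappa> x')"

definition separates_fibres :: "('x \<Rightarrow> 'c) \<Rightarrow> ('x \<Rightarrow> 'b pmf) \<Rightarrow> bool" where
  "separates_fibres \<pi> \<kappa> \<longleftrightarrow> (\<forall>x x' t. t \<in> set_pmf (\<kappa> x) \<longrightarrow> t \<in> set_pmf (\<kappa> x') \<longrightarrow> \<pi> x = \<pi> x')"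

lemma chan_comp_det_right: "chan_comp \<gamma> (det f) = (\<lambda>x. \<gamma> (f x))"
  by (simp add: chan_comp_def det_def bind_return_pmf)

lemma chan_comp_det_left: "chan_comp (det f) \<gamma> a = map_pmf f (\<gamma> a)"
  by (simp add: chan_comp_def det_def map_pmf_def)

lemma congruent_factorization_iff:
  "(\<exists>\<gamma>. congruent_chan (range \<pi>) \<gamma> \<and> \<kappa> = chan_comp \<gamma> (det \<pi>)) \<longleftrightarrow>
     constant_on_fibres \<pi> \<kappa> \<and> separates_fibres \<pi> \<kappa>"
proof
  assume "\<exists>\<gamma>. congruent_chan (range \<pi>) \<gamma> \<and> \<kappa> = chan_comp \<gamma> (det \<pi>)"
  then obtain \<gamma> f where \<kappa>: "\<kappa> = chan_comp \<gamma> (det \<pi>)"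
    and "\<forall>c\<in>range \<pi>. chan_comp (det f) \<gamma> c = det id c"
    unfolding congruent_chan_def by auto
  then have \<kappa>: "\<kappa> = (\<lambda>x. \<gamma> (\<pi> x))" and f: "\<And>x. map_pmf f (\<gamma> (\<pi> x)) = return_pmf (\<pi> x)"
    by (simp_all only: chan_comp_det_left chan_comp_det_right) (auto simp: det_def)
  have fibre: "f t = \<pi> x" if "t \<in> set_pmf (\<kappa> x)" for t x
    using that arg_cong[OF f[of x], of set_pmf] by (auto simp: \<kappa>)
  have "separates_fibres \<pi> \<kappa>"
    unfolding separates_fibres_def
  proof (intro allI impI)
    fix x x' t
    assume "t \<in> set_pmf (\<kappa> x)" and "t \<in> set_pmf (\<kappa> x')"
    then show "\<pi> x = \<pi> x'"
      using fibre[of t x] fibre[of t x'] by simp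
  qed
  then show "constant_on_fibres \<pi> \<kappa> \<and> separates_fibres \<pi> \<kappa>"
    by (simp add: constant_on_fibres_def \<kappa>)
next
  assume "constant_on_fibres \<pi> \<kappa> \<and> separates_fibres \<pi> \<kappa>"
  then have const: "\<And>x x'. \<pi> x = \<pi> x' \<Longrightarrow> \<kappa> x = \<kappa> x'"
    and sep: "\<And>x x' t. t \<in> set_pmf (\<kappa> x) \<Longrightarrow> t \<in> set_pmf (\<kappa> x') \<Longrightarrow> \<pi> x = \<pi> x'"
    unfolding constant_on_fibres_def separates_fibres_def by blast+
  define \<gamma> where "\<gamma> c = \<kappa> (SOME x. \<pi> x = c)" for c
  define f where "f t = \<pi> (SOME x. t \<in> set_pmf (\<kappa> x))" for t
  have \<gamma>: "\<gamma> (\<pi> x) = \<kappa> x" for x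
    unfolding \<gamma>_def by (rule const, rule someI[where P="\<lambda>y. \<pi> y = \<pi> x"]) (rule refl)
  have "f t = \<pi> x" if "t \<in> set_pmf (\<kappa> x)" for t x
    unfolding f_def by (rule sep[OF someI[where P="\<lambda>x. t \<in> set_pmf (\<kappa> x)", OF that] that])
  then have "map_pmf f (\<gamma> (\<pi> x)) = map_pmf (\<lambda>_. \<pi> x) (\<kappa> x)" for x
    unfolding \<gamma> by (intro map_pmf_cong) auto
  then have "chan_comp (det f) \<gamma> (\<pi> x) = det id (\<pi> x)" for x
    unfolding chan_comp_det_left by (simp add: det_def map_pmf_const)
  then have "congruent_chan (range \<pi>) \<gamma>"
    unfolding congruent_chan_def by (intro exI[of _ f]) (auto simp: f_def)
  moreover have "\<kappa> = chan_comp \<gamma> (det \<pi>)"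
    by (simp add: chan_comp_det_right \<gamma>)
  ultimately show "\<exists>\<gamma>. congruent_chan (range \<pi>) \<gamma> \<and> \<kappa> = chan_comp \<gamma> (det \<pi>)"
    by blast
qed

section \<open>The distributions of the Markov chain \<open>T - X - Y\<close>\<close>

definition pX :: "('x \<times> 'y) pmf \<Rightarrow> 'x \<Rightarrow> real" where
  "pX p x = pmf (map_pmf fst p) x"

definition pY :: "('x \<times> 'y) pmf \<Rightarrow> 'y \<Rightarrow> real" where
  "pY p y = pmf (map_pmf snd p) y"

definition qT :: "('x::finite \<times> 'y) pmf \<Rightarrow> ('x \<Rightarrow> nat pmf) \<Rightarrow> nat \<Rightarrow> real" where
  "qT p \<kappa> t = (\<Sum>x\<in>UNIV. pX p x * pmf (\<kappa> x) t)"

definition qTY :: "('x::finite \<times> 'y) pmf \<Rightarrow> ('x \<Rightarrow> nat pmf) \<Rightarrow> nat \<Rightarrow> 'y \<Rightarrow> real" where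
  "qTY p \<kappa> t y = (\<Sum>x\<in>UNIV. pmf p (x, y) * pmf (\<kappa> x) t)"

lemma pX_eq_sum: "pX p x = (\<Sum>y\<in>UNIV. pmf p (x, y))"
  for p :: "('x::finite \<times> 'y::finite) pmf"
  unfolding pX_def pmf_map
  by (subst measure_measure_pmf_finite)
     (auto intro!: sum.reindex_bij_witness[where j=snd and i="Pair x"])

lemma pY_eq_sum: "pY p y = (\<Sum>x\<in>UNIV. pmf p (x, y))"
  for p :: "('x::finite \<times> 'y::finite) pmf"
  unfolding pY_def pmf_map
  by (subst measure_measure_pmf_finite)
     (auto intro!: sum.reindex_bij_witness[where j=fst and i="\<lambda>x. (x, y)"])

lemma pmf_le_pX: "pmf p (x, y) \<le> pX p x"
  for p :: "('x::finite \<times> 'y::finite) pmf"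
  unfolding pX_eq_sum by (rule member_le_sum) auto

lemma pmf_le_pY: "pmf p (x, y) \<le> pY p y"
  for p :: "('x::finite \<times> 'y::finite) pmf"
  unfolding pY_eq_sum by (rule member_le_sum) auto

lemma pX_nonneg: "0 \<le> pX p x"
  by (simp add: pX_def)

lemma pY_nonneg: "0 \<le> pY p y"
  by (simp add: pY_def)

lemma pX_pos: "set_pmf (map_pmf fst p) = UNIV \<Longrightarrow> 0 < pX p x"
  by (simp add: pX_def pmf_positive)

lemma qT_nonneg: "0 \<le> qT p \<kappa> t"
  by (simp add: qT_def pX_nonneg sum_nonneg)

lemma qTY_nonneg: "0 \<le> qTY p \<kappa> t y"
  by (simp add: qTY_def sum_nonneg)

lemma pX_mult_le_qT: "pX p x * pmf (\<kappa> x) t \<le> qT p \<kappa> t"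
  unfolding qT_def by (rule member_le_sum) (auto simp: pX_nonneg)

lemma qTY_le_qT: "qTY p \<kappa> t y \<le> qT p \<kappa> t"
  for p :: "('x::finite \<times> 'y::finite) pmf"
  unfolding qTY_def qT_def by (intro sum_mono mult_right_mono) (auto simp: pmf_le_pX)

lemma qT_summable_on: "qT p \<kappa> summable_on A"
  unfolding qT_def[abs_def]
  by (rule summable_on_sum) (auto intro: summable_on_cmult_right pmf_summable_on)

lemma qTY_summable_on: "(\<lambda>t. qTY p \<kappa> t y) summable_on A"
  unfolding qTY_def
  by (rule summable_on_sum) (auto intro: summable_on_cmult_right pmf_summable_on)

lemma pmf_joint_XT:
  "pmf (map_pmf (\<lambda>(x, y, t). (x, t)) (joint p \<kappa>)) (x, t) = pX p x * pmf (\<kappa> x) t"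
  for p :: "('x::finite \<times> 'y) pmf"
proof -
  have XT: "map_pmf (\<lambda>(x, y, t). (x, t)) (joint p \<kappa>) = bind_pmf (map_pmf fst p) (\<lambda>x. map_pmf (Pair x) (\<kappa> x))"
    unfolding joint_def map_bind_pmf bind_map_pmf
    by (intro bind_pmf_cong) (auto simp: map_pmf_comp)
  have "pmf (map_pmf (Pair x') (\<kappa> x')) (x, t) = (if x' = x then pmf (\<kappa> x) t else 0)" for x'
    using pmf_map_inj'[of "Pair x" "\<kappa> x" t] by (auto simp: inj_on_def intro: pmf_map_outside)
  then show ?thesis
    unfolding XT pmf_bind pX_def
    by (subst integral_measure_pmf_real[where A="{x}"]) (auto split: if_splits)
qed

lemma pmf_joint_TY:
  "pmf (map_pmf (\<lambda>(x, y, t). (t, y)) (joint p \<kappa>)) (t, y) = qTY p \<kappa> t y"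
  for p :: "('x::finite \<times> 'y::finite) pmf"
proof -
  have TY: "map_pmf (\<lambda>(x, y, t). (t, y)) (joint p \<kappa>) = bind_pmf p (\<lambda>(x, y). map_pmf (\<lambda>t. (t, y)) (\<kappa> x))"
    unfolding joint_def map_bind_pmf
    by (intro bind_pmf_cong) (auto simp: map_pmf_comp)
  have "pmf (map_pmf (\<lambda>t. (t, y')) M) (t, y) = (if y' = y then pmf M t else 0)" for M y'
    using pmf_map_inj'[of "\<lambda>t. (t, y)" M t] by (auto simp: inj_on_def intro: pmf_map_outside)
  then have "pmf (map_pmf (\<lambda>(x, y, t). (t, y)) (joint p \<kappa>)) (t, y) = (\<Sum>z\<in>UNIV \<times> {y}. pmf (\<kappa> (fst z)) t * pmf p z)"
    unfolding TY pmf_bind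
    by (subst integral_measure_pmf_real[where A="UNIV \<times> {y}"]) (auto split: prod.splits if_splits intro!: sum.cong)
  also have "\<dots> = qTY p \<kappa> t y"
    unfolding qTY_def by (rule sum.reindex_bij_witness[where j=fst and i="\<lambda>x. (x, y)"]) auto
  finally show ?thesis .
qed

lemma pmf_joint_T: "pmf (map_pmf (\<lambda>(x, y, t). t) (joint p \<kappa>)) t = qT p \<kappa> t"
  for p :: "('x::finite \<times> 'y) pmf"
proof -
  have T: "map_pmf (\<lambda>(x, y, t). t) (joint p \<kappa>) = bind_pmf (map_pmf fst p) \<kappa>"
    unfolding joint_def map_bind_pmf bind_map_pmf
    by (simp add: map_pmf_comp case_prod_beta)
  show ?thesis
    unfolding T pmf_bind qT_def pX_def
    by (subst integral_measure_pmf_real[where A=UNIV]) (auto simp: mult.commute)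
qed

lemma joint_X: "map_pmf (\<lambda>(x, y, t). x) (joint p \<kappa>) = map_pmf fst p"
  unfolding joint_def map_bind_pmf
  by (simp add: map_pmf_comp case_prod_beta bind_return_pmf' flip: map_pmf_def)

lemma joint_Y: "map_pmf (\<lambda>(x, y, t). y) (joint p \<kappa>) = map_pmf snd p"
  unfolding joint_def map_bind_pmf
  by (simp add: map_pmf_comp case_prod_beta bind_return_pmf' flip: map_pmf_def)

definition I_XT_term :: "('x::finite \<times> 'y) pmf \<Rightarrow> ('x \<Rightarrow> nat pmf) \<Rightarrow> 'x \<Rightarrow> nat \<Rightarrow> real" where
  "I_XT_term p \<kappa> x t =
     pX p x * pmf (\<kappa> x) t * ln (pX p x * pmf (\<kappa> x) t / (pX p x * qT p \<kappa> t))"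

definition I_TY_term :: "('x::finite \<times> 'y) pmf \<Rightarrow> ('x \<Rightarrow> nat pmf) \<Rightarrow> 'y \<Rightarrow> nat \<Rightarrow> real" where
  "I_TY_term p \<kappa> y t = qTY p \<kappa> t y * ln (qTY p \<kappa> t y / (qT p \<kappa> t * pY p y))"

definition I_XY_term :: "('x \<times> 'y) pmf \<Rightarrow> 'x \<Rightarrow> 'y \<Rightarrow> real" where
  "I_XY_term p x y = pmf p (x, y) * ln (pmf p (x, y) / (pX p x * pY p y))"

lemma I_XT_term_summable_on: "I_XT_term p \<kappa> x summable_on A"
proof (cases "pX p x = 0")
  case False
  then have px: "0 < pX p x"
    using pX_nonneg[of p x] by simp
  show ?thesis
    unfolding I_XT_term_def[abs_def]
  proof (rule summable_on_mult_ln_div[where c="1 / pX p x"])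
    show "(\<lambda>t. pX p x * pmf (\<kappa> x) t) summable_on A" "(\<lambda>t. pX p x * qT p \<kappa> t) summable_on A"
      by (auto intro: summable_on_cmult_right pmf_summable_on qT_summable_on)
    show "pX p x * pmf (\<kappa> x) t \<le> 1 / pX p x * (pX p x * qT p \<kappa> t)" for t
      using px pX_mult_le_qT[of p x \<kappa> t] by simp
  qed (use px in \<open>auto simp: qT_nonneg\<close>)
next
  case True
  then have "I_XT_term p \<kappa> x = (\<lambda>_. 0)"
    by (simp add: fun_eq_iff I_XT_term_def)
  then show ?thesis
    by simp
qed

lemma I_TY_term_summable_on: "I_TY_term p \<kappa> y summable_on A"
  for p :: "('x::finite \<times> 'y::finite) pmf"
proof (cases "pY p y = 0")
  case True
  then have "pmf p (x, y) = 0" for x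
    using pmf_le_pY[of p x y] pmf_nonneg[of p "(x, y)"] by simp
  then have "I_TY_term p \<kappa> y = (\<lambda>_. 0)"
    by (simp add: fun_eq_iff I_TY_term_def qTY_def)
  then show ?thesis
    by simp
next
  case False
  then have py: "0 < pY p y"
    using pY_nonneg[of p y] by simp
  show ?thesis
    unfolding I_TY_term_def[abs_def]
  proof (rule summable_on_mult_ln_div[where c="1 / pY p y"])
    show "(\<lambda>t. qT p \<kappa> t * pY p y) summable_on A"
      by (intro summable_on_cmult_left qT_summable_on)
    show "qTY p \<kappa> t y \<le> 1 / pY p y * (qT p \<kappa> t * pY p y)" for t
      using py qTY_le_qT[of p \<kappa> t y] by simp
  qed (use py in \<open>auto simp: qT_nonneg qTY_nonneg qTY_summable_on\<close>)
qed

lemma I_XT_eq_sum: "I_XT p \<kappa> = (\<Sum>x\<in>UNIV. infsum (I_XT_term p \<kappa> x) UNIV)"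
  for p :: "('x::finite \<times> 'y::finite) pmf"
proof -
  have X: "map_pmf fst (map_pmf (\<lambda>(x, y, t). (x, t)) (joint p \<kappa>)) = map_pmf (\<lambda>(x, y, t). x) (joint p \<kappa>)"
    and T: "map_pmf snd (map_pmf (\<lambda>(x, y, t). (x, t)) (joint p \<kappa>)) = map_pmf (\<lambda>(x, y, t). t) (joint p \<kappa>)"
    unfolding map_pmf_comp by (auto intro: map_pmf_cong)
  have "I_XT p \<kappa> = infsum (\<lambda>(x, t). I_XT_term p \<kappa> x t) UNIV"
    unfolding I_XT_def mutual_info_def X T joint_X pmf_joint_XT pmf_joint_T
    by (simp add: I_XT_term_def pX_def)
  then show ?thesis
    by (simp add: infsum_prod_finite_fst I_XT_term_summable_on)
qed

lemma I_TY_eq_sum: "I_TY p \<kappa> = (\<Sum>y\<in>UNIV. infsum (I_TY_term p \<kappa> y) UNIV)"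
  for p :: "('x::finite \<times> 'y::finite) pmf"
proof -
  have T: "map_pmf fst (map_pmf (\<lambda>(x, y, t). (t, y)) (joint p \<kappa>)) = map_pmf (\<lambda>(x, y, t). t) (joint p \<kappa>)"
    and Y: "map_pmf snd (map_pmf (\<lambda>(x, y, t). (t, y)) (joint p \<kappa>)) = map_pmf (\<lambda>(x, y, t). y) (joint p \<kappa>)"
    unfolding map_pmf_comp by (auto intro: map_pmf_cong)
  have "I_TY p \<kappa> = infsum (\<lambda>(t, y). I_TY_term p \<kappa> y t) UNIV"
    unfolding I_TY_def mutual_info_def T Y joint_Y pmf_joint_TY pmf_joint_T
    by (simp add: I_TY_term_def pY_def)
  then show ?thesis
    by (simp add: infsum_prod_finite_snd I_TY_term_summable_on)
qed

lemma mutual_info_eq_sum: "mutual_info p = (\<Sum>y\<in>UNIV. \<Sum>x\<in>UNIV. I_XY_term p x y)"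
  for p :: "('x::finite \<times> 'y::finite) pmf"
  unfolding mutual_info_def I_XY_term_def pX_def pY_def
  by (subst infsum_prod_finite_snd) auto

section \<open>The data processing inequality and its equality case\<close>

lemma piX_eq_iff: "piX p x = piX p x' \<longleftrightarrow> condY p x = condY p x'"
  unfolding piX_def by auto

lemma pmf_eq_pX_condY:
  fixes p :: "('x::finite \<times> 'y::finite) pmf"
  assumes full: "set_pmf (map_pmf fst p) = UNIV"
  shows "pmf p (x, y) = pX p x * pmf (condY p x) y"
proof -
  have "x \<in> fst ` set_pmf p"
    using full by (metis UNIV_I set_map_pmf)
  then have nonempty: "set_pmf p \<inter> {z. fst z = x} \<noteq> {}"
    by auto
  have mass: "measure_pmf.prob p {z. fst z = x} = pX p x"
    unfolding pX_def pmf_map by (simp add: vimage_def)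
  have "pmf (condY p x) y = measure_pmf.prob (cond_pmf p {z. fst z = x}) (snd -` {y})"
    unfolding condY_def pmf_map ..
  also have "\<dots> = (\<Sum>z\<in>snd -` {y}. pmf (cond_pmf p {z. fst z = x}) z)"
    by (rule measure_measure_pmf_finite) simp
  also have "\<dots> = (\<Sum>z\<in>snd -` {y}. if fst z = x then pmf p z / pX p x else 0)"
    unfolding pmf_cond[OF nonempty] mass by simp
  also have "\<dots> = (\<Sum>z\<in>{(x, y)}. pmf p z / pX p x)"
    by (rule sum.mono_neutral_cong_right) auto
  finally show ?thesis
    using pX_pos[OF full, of x] by simp
qed

definition dpi_gap :: "('x::finite \<times> 'y) pmf \<Rightarrow> ('x \<Rightarrow> nat pmf) \<Rightarrow> 'y \<Rightarrow> nat \<Rightarrow> real" where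
  "dpi_gap p \<kappa> y t = (\<Sum>x\<in>UNIV. I_XY_term p x y * pmf (\<kappa> x) t) - I_TY_term p \<kappa> y t"

text \<open>For fixed \<open>y\<close> and \<open>t\<close>, \<open>dpi_gap\<close> is the defect of the log-sum inequality for
  \<open>a x = p(x, y) \<kappa>(t|x)\<close> and \<open>b x = p(x) \<kappa>(t|x) p(y)\<close>.\<close>
lemma dpi_gap:
  fixes p :: "('x::finite \<times> 'y::finite) pmf"
  shows dpi_gap_nonneg: "0 \<le> dpi_gap p \<kappa> y t"
    and dpi_gap_eq_0_iff: "dpi_gap p \<kappa> y t = 0 \<longleftrightarrow>
      (\<forall>x. pmf p (x, y) * pmf (\<kappa> x) t * (qT p \<kappa> t * pY p y) = pX p x * pmf (\<kappa> x) t * pY p y * qTY p \<kappa> t y)"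
proof -
  define a where "a x = pmf p (x, y) * pmf (\<kappa> x) t" for x
  define b where "b x = pX p x * pmf (\<kappa> x) t * pY p y" for x
  have ab: "0 \<le> a x" "0 \<le> b x" for x
    by (simp_all add: a_def b_def pX_nonneg pY_nonneg)
  have supp: "0 < b x" if "0 < a x" for x
  proof -
    have "0 < pmf p (x, y)" and "0 < pmf (\<kappa> x) t"
      using that by (auto simp: a_def zero_less_mult_iff order.strict_iff_order)
    then show ?thesis
      using pmf_le_pX[of p x y] pmf_le_pY[of p x y] by (simp add: b_def)
  qed
  have sums: "sum a UNIV = qTY p \<kappa> t y" "sum b UNIV = qT p \<kappa> t * pY p y"
    by (simp_all add: a_def b_def qTY_def qT_def sum_distrib_right)
  have "I_XY_term p x y * pmf (\<kappa> x) t = a x * ln (a x / b x)" for x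
    by (cases "pmf (\<kappa> x) t = 0") (simp_all add: I_XY_term_def a_def b_def)
  then have gap: "dpi_gap p \<kappa> y t = (\<Sum>x\<in>UNIV. a x * ln (a x / b x)) - sum a UNIV * ln (sum a UNIV / sum b UNIV)"
    by (simp add: dpi_gap_def I_TY_term_def sums)
  show "0 \<le> dpi_gap p \<kappa> y t"
    unfolding gap using log_sum_inequality[of UNIV a b] ab supp by simp
  have "dpi_gap p \<kappa> y t = 0 \<longleftrightarrow> (\<forall>x\<in>UNIV. a x * sum b UNIV = b x * sum a UNIV)"
    unfolding gap using log_sum_eq_iff[of UNIV a b] ab supp by simp
  then show "dpi_gap p \<kappa> y t = 0 \<longleftrightarrow>
      (\<forall>x. pmf p (x, y) * pmf (\<kappa> x) t * (qT p \<kappa> t * pY p y) = pX p x * pmf (\<kappa> x) t * pY p y * qTY p \<kappa> t y)"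
    unfolding sums by (simp add: a_def b_def)
qed

lemma dpi_gap_summable_on: "dpi_gap p \<kappa> y summable_on A"
  for p :: "('x::finite \<times> 'y::finite) pmf"
  unfolding dpi_gap_def[abs_def]
  by (intro summable_on_diff summable_on_sum summable_on_cmult_right pmf_summable_on I_TY_term_summable_on) simp

lemma mutual_info_minus_I_TY:
  fixes p :: "('x::finite \<times> 'y::finite) pmf"
  shows "mutual_info p - I_TY p \<kappa> = (\<Sum>y\<in>UNIV. infsum (dpi_gap p \<kappa> y) UNIV)"
proof -
  have "infsum (\<lambda>t. \<Sum>x\<in>UNIV. I_XY_term p x y * pmf (\<kappa> x) t) UNIV = (\<Sum>x\<in>UNIV. I_XY_term p x y)" for y
    by (simp add: infsum_sum summable_on_cmult_right pmf_summable_on infsum_cmult_right' infsum_pmf_UNIV)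
  then have "infsum (dpi_gap p \<kappa> y) UNIV = (\<Sum>x\<in>UNIV. I_XY_term p x y) - infsum (I_TY_term p \<kappa> y) UNIV" for y
    unfolding dpi_gap_def[abs_def]
    by (simp add: infsum_diff summable_on_sum summable_on_cmult_right pmf_summable_on I_TY_term_summable_on)
  then show ?thesis
    by (simp add: mutual_info_eq_sum I_TY_eq_sum sum_subtractf)
qed

lemma I_TY_le_mutual_info: "I_TY p \<kappa> \<le> mutual_info p"
  for p :: "('x::finite \<times> 'y::finite) pmf"
proof -
  have "0 \<le> (\<Sum>y\<in>UNIV. infsum (dpi_gap p \<kappa> y) UNIV)"
    by (intro sum_nonneg infsum_nonneg) (simp add: dpi_gap_nonneg)
  then show ?thesis
    using mutual_info_minus_I_TY[of p \<kappa>] by linarith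
qed

lemma I_TY_eq_mutual_info_iff_dpi_gap:
  fixes p :: "('x::finite \<times> 'y::finite) pmf"
  shows "I_TY p \<kappa> = mutual_info p \<longleftrightarrow> (\<forall>y t. dpi_gap p \<kappa> y t = 0)"
proof -
  have "I_TY p \<kappa> = mutual_info p \<longleftrightarrow> (\<Sum>y\<in>UNIV. infsum (dpi_gap p \<kappa> y) UNIV) = 0"
    using mutual_info_minus_I_TY[of p \<kappa>] by linarith
  also have "\<dots> \<longleftrightarrow> (\<forall>y. infsum (dpi_gap p \<kappa> y) UNIV = 0)"
    by (simp add: sum_nonneg_eq_0_iff infsum_nonneg dpi_gap_nonneg)
  also have "\<dots> \<longleftrightarrow> (\<forall>y t. dpi_gap p \<kappa> y t = 0)"
    by (simp add: infsum_nonneg_eq_0_iff dpi_gap_summable_on dpi_gap_nonneg)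
  finally show ?thesis .
qed

lemma qTY_eq_condY_mult_qT:
  fixes p :: "('x::finite \<times> 'y::finite) pmf"
  assumes full: "set_pmf (map_pmf fst p) = UNIV"
    and sep: "separates_fibres (piX p) \<kappa>" and t: "t \<in> set_pmf (\<kappa> x)"
  shows "qTY p \<kappa> t y = pmf (condY p x) y * qT p \<kappa> t"
proof -
  have "pmf p (x', y) * pmf (\<kappa> x') t = pmf (condY p x) y * (pX p x' * pmf (\<kappa> x') t)" for x'
  proof (cases "t \<in> set_pmf (\<kappa> x')")
    case True
    then have "condY p x' = condY p x"
      using sep t unfolding separates_fibres_def piX_eq_iff by blast
    then show ?thesis
      using pmf_eq_pX_condY[OF full, of x' y] by simp
  qed (simp add: set_pmf_eq)
  then show ?thesis
    unfolding qTY_def qT_def sum_distrib_left by (rule sum.cong[OF refl])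
qed

lemma qTY_eq_condY_mult_qT_if_dpi_gap_eq_0:
  fixes p :: "('x::finite \<times> 'y::finite) pmf"
  assumes full: "set_pmf (map_pmf fst p) = UNIV"
    and gap: "\<And>y. dpi_gap p \<kappa> y t = 0" and t: "t \<in> set_pmf (\<kappa> x)"
  shows "qTY p \<kappa> t y = pmf (condY p x) y * qT p \<kappa> t"
proof (cases "pY p y = 0")
  case True
  then have "pmf p (x', y) = 0" for x'
    using pmf_le_pY[of p x' y] pmf_nonneg[of p "(x', y)"] by simp
  then show ?thesis
    using pmf_eq_pX_condY[OF full, of x y] pX_pos[OF full, of x] by (simp add: qTY_def)
next
  case False
  have pos: "0 < pX p x * pmf (\<kappa> x) t * pY p y"
    using False t pX_pos[OF full, of x] pY_nonneg[of p y] by (simp add: set_pmf_iff order.strict_iff_order)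
  have "pmf p (x, y) * pmf (\<kappa> x) t * (qT p \<kappa> t * pY p y) = pX p x * pmf (\<kappa> x) t * pY p y * qTY p \<kappa> t y"
    using gap[of y] by (simp add: dpi_gap_eq_0_iff)
  then have "(pX p x * pmf (\<kappa> x) t * pY p y) * (pmf (condY p x) y * qT p \<kappa> t)
      = (pX p x * pmf (\<kappa> x) t * pY p y) * qTY p \<kappa> t y"
    unfolding pmf_eq_pX_condY[OF full, of x y] by (simp add: algebra_simps)
  moreover have "pX p x * pmf (\<kappa> x) t * pY p y \<noteq> 0"
    using pos by linarith
  ultimately show ?thesis
    by (metis mult_left_cancel)
qed

lemma dpi_gap_eq_0_iff_separates:
  fixes p :: "('x::finite \<times> 'y::finite) pmf"
  assumes full: "set_pmf (map_pmf fst p) = UNIV"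
  shows "(\<forall>y t. dpi_gap p \<kappa> y t = 0) \<longleftrightarrow> separates_fibres (piX p) \<kappa>"
proof
  assume gap: "\<forall>y t. dpi_gap p \<kappa> y t = 0"
  show "separates_fibres (piX p) \<kappa>"
    unfolding separates_fibres_def piX_eq_iff
  proof (intro allI impI pmf_eqI)
    fix x x' t y
    assume t: "t \<in> set_pmf (\<kappa> x)" and t': "t \<in> set_pmf (\<kappa> x')"
    have "0 < pX p x * pmf (\<kappa> x) t"
      using t pX_pos[OF full, of x] by (simp add: set_pmf_iff order.strict_iff_order)
    then have "0 < qT p \<kappa> t"
      using pX_mult_le_qT[of p x \<kappa> t] by linarith
    moreover have gap_t: "\<And>y. dpi_gap p \<kappa> y t = 0"
      using gap by blast
    have "pmf (condY p x) y * qT p \<kappa> t = pmf (condY p x') y * qT p \<kappa> t"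
      using qTY_eq_condY_mult_qT_if_dpi_gap_eq_0[OF full gap_t t, of y]
        qTY_eq_condY_mult_qT_if_dpi_gap_eq_0[OF full gap_t t', of y]
      by linarith
    ultimately show "pmf (condY p x) y = pmf (condY p x') y"
      by simp
  qed
next
  assume sep: "separates_fibres (piX p) \<kappa>"
  have "pmf p (x, y) * pmf (\<kappa> x) t * (qT p \<kappa> t * pY p y) = pX p x * pmf (\<kappa> x) t * pY p y * qTY p \<kappa> t y"
    for x y t
  proof (cases "t \<in> set_pmf (\<kappa> x)")
    case True
    then show ?thesis
      unfolding pmf_eq_pX_condY[OF full, of x y] qTY_eq_condY_mult_qT[OF full sep True]
      by (simp add: algebra_simps)
  qed (simp add: set_pmf_eq)
  then show "\<forall>y t. dpi_gap p \<kappa> y t = 0"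
    by (simp add: dpi_gap_eq_0_iff)
qed

lemma I_TY_eq_mutual_info_iff:
  fixes p :: "('x::finite \<times> 'y::finite) pmf"
  assumes "set_pmf (map_pmf fst p) = UNIV"
  shows "I_TY p \<kappa> = mutual_info p \<longleftrightarrow> separates_fibres (piX p) \<kappa>"
  using I_TY_eq_mutual_info_iff_dpi_gap dpi_gap_eq_0_iff_separates[OF assms] by blast

section \<open>Averaging a channel over the classes of \<open>\<sim>\<^sub>\<X>\<close>\<close>

definition class_mass :: "('x::finite \<times> 'y) pmf \<Rightarrow> 'x \<Rightarrow> real" where
  "class_mass p x = (\<Sum>x'\<in>piX p x. pX p x')"

definition class_avg :: "('x \<times> 'y) pmf \<Rightarrow> ('x \<Rightarrow> 'b pmf) \<Rightarrow> 'x \<Rightarrow> 'b pmf" where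
  "class_avg p \<kappa> x = bind_pmf (cond_pmf (map_pmf fst p) (piX p x)) \<kappa>"

lemma mem_piX_iff: "x \<in> piX p x0 \<longleftrightarrow> piX p x = piX p x0"
  unfolding piX_eq_iff by (simp add: piX_def)

lemma constant_on_fibres_class_avg: "constant_on_fibres (piX p) (class_avg p \<kappa>)"
  by (simp add: constant_on_fibres_def class_avg_def)

lemma class_mass_pos:
  fixes p :: "('x::finite \<times> 'y) pmf"
  assumes "set_pmf (map_pmf fst p) = UNIV"
  shows "0 < class_mass p x"
proof -
  have "pX p x \<le> class_mass p x"
    unfolding class_mass_def by (rule member_le_sum) (auto simp: piX_def pX_nonneg)
  then show ?thesis
    using pX_pos[OF assms, of x] by simp
qed

lemma pmf_class_avg:
  fixes p :: "('x::finite \<times> 'y) pmf"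
  assumes full: "set_pmf (map_pmf fst p) = UNIV"
  shows "pmf (class_avg p \<kappa> x) t = (\<Sum>x'\<in>piX p x. pX p x' * pmf (\<kappa> x') t) / class_mass p x"
proof -
  have nonempty: "set_pmf (map_pmf fst p) \<inter> piX p x \<noteq> {}"
    using full by (auto simp: piX_def)
  have mass: "measure_pmf.prob (map_pmf fst p) (piX p x) = class_mass p x"
    unfolding class_mass_def pX_def by (rule measure_measure_pmf_finite) simp
  have "pmf (class_avg p \<kappa> x) t = (\<Sum>x'\<in>UNIV. pmf (\<kappa> x') t * pmf (cond_pmf (map_pmf fst p) (piX p x)) x')"
    unfolding class_avg_def pmf_bind by (rule integral_measure_pmf_real) auto
  also have "\<dots> = (\<Sum>x'\<in>UNIV. if x' \<in> piX p x then pX p x' * pmf (\<kappa> x') t / class_mass p x else 0)"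
    using pmf_cond[OF nonempty] mass by (intro sum.cong) (auto simp: pX_def)
  also have "\<dots> = (\<Sum>x'\<in>piX p x. pX p x' * pmf (\<kappa> x') t / class_mass p x)"
    by (rule sum.mono_neutral_cong_right) auto
  finally show ?thesis
    by (simp add: sum_divide_distrib)
qed

lemma sum_by_classes: "(\<Sum>x\<in>UNIV. h x) = (\<Sum>c\<in>Xbar p. \<Sum>x\<in>c. h x)"
  for h :: "'x::finite \<Rightarrow> real"
proof -
  have "{x \<in> UNIV. piX p x = c} = c" if "c \<in> Xbar p" for c
    using that by (auto simp: Xbar_def piX_eq_iff piX_def)
  then have "(\<Sum>c\<in>Xbar p. \<Sum>x\<in>c. h x) = (\<Sum>c\<in>Xbar p. \<Sum>x\<in>{x \<in> UNIV. piX p x = c}. h x)"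
    by (intro sum.cong refl) (simp only:)
  also have "\<dots> = (\<Sum>x\<in>UNIV. h x)"
    by (rule sum.group) (auto simp: Xbar_def)
  finally show ?thesis
    by simp
qed

lemma class_avg_preserves_weighted_sum:
  fixes p :: "('x::finite \<times> 'y) pmf"
  assumes full: "set_pmf (map_pmf fst p) = UNIV"
    and g: "\<And>x x'. piX p x = piX p x' \<Longrightarrow> g x = g x'"
  shows "(\<Sum>x\<in>UNIV. pX p x * g x * pmf (class_avg p \<kappa> x) t) = (\<Sum>x\<in>UNIV. pX p x * g x * pmf (\<kappa> x) t)"
  unfolding sum_by_classes[of _ p]
proof (rule sum.cong[OF refl])
  fix c assume "c \<in> Xbar p"
  then obtain x0 where c: "c = piX p x0"
    by (auto simp: Xbar_def)
  have fibre: "piX p x = c" "g x = g x0" if "x \<in> c" for x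
  proof -
    show "piX p x = c"
      using that by (simp add: c mem_piX_iff)
    then show "g x = g x0"
      by (intro g) (simp add: c)
  qed
  define A where "A = (\<Sum>x\<in>c. pX p x * pmf (\<kappa> x) t)"
  have mass: "(\<Sum>x\<in>c. pX p x) = class_mass p x0"
    by (simp add: class_mass_def c)
  have "pmf (class_avg p \<kappa> x) t = A / class_mass p x0" if "x \<in> c" for x
    using fibre(1)[OF that] by (simp add: pmf_class_avg[OF full] A_def class_mass_def c)
  then have "(\<Sum>x\<in>c. pX p x * g x * pmf (class_avg p \<kappa> x) t) = (\<Sum>x\<in>c. pX p x) * (g x0 * (A / class_mass p x0))"
    unfolding sum_distrib_right by (intro sum.cong) (simp_all add: fibre)
  also have "\<dots> = g x0 * A"
    using class_mass_pos[OF full, of x0] by (simp add: mass)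
  also have "\<dots> = (\<Sum>x\<in>c. pX p x * g x * pmf (\<kappa> x) t)"
    unfolding A_def sum_distrib_left by (intro sum.cong) (simp_all add: fibre)
  finally show "(\<Sum>x\<in>c. pX p x * g x * pmf (class_avg p \<kappa> x) t) = (\<Sum>x\<in>c. pX p x * g x * pmf (\<kappa> x) t)" .
qed

lemma qT_class_avg:
  fixes p :: "('x::finite \<times> 'y) pmf"
  assumes "set_pmf (map_pmf fst p) = UNIV"
  shows "qT p (class_avg p \<kappa>) = qT p \<kappa>"
proof
  fix t
  show "qT p (class_avg p \<kappa>) t = qT p \<kappa> t"
    using class_avg_preserves_weighted_sum[OF assms, of "\<lambda>_. 1" \<kappa> t] by (simp add: qT_def)
qed

lemma qTY_class_avg:
  fixes p :: "('x::finite \<times> 'y::finite) pmf"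
  assumes full: "set_pmf (map_pmf fst p) = UNIV"
  shows "qTY p (class_avg p \<kappa>) t y = qTY p \<kappa> t y"
  using class_avg_preserves_weighted_sum[OF full, of "\<lambda>x. pmf (condY p x) y"]
  by (simp add: qTY_def pmf_eq_pX_condY[OF full] piX_eq_iff)

lemma I_TY_class_avg:
  fixes p :: "('x::finite \<times> 'y::finite) pmf"
  assumes "set_pmf (map_pmf fst p) = UNIV"
  shows "I_TY p (class_avg p \<kappa>) = I_TY p \<kappa>"
proof -
  have "I_TY_term p (class_avg p \<kappa>) = I_TY_term p \<kappa>"
    by (simp add: fun_eq_iff I_TY_term_def qT_class_avg[OF assms] qTY_class_avg[OF assms])
  then show ?thesis
    by (simp add: I_TY_eq_sum)
qed

lemma sum_I_XT_term_class_avg: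
  fixes p :: "('x::finite \<times> 'y) pmf"
  assumes full: "set_pmf (map_pmf fst p) = UNIV" and c: "c \<in> Xbar p"
  shows "(\<Sum>x\<in>c. I_XT_term p (class_avg p \<kappa>) x t) =
    (\<Sum>x\<in>c. pX p x * pmf (\<kappa> x) t) * ln ((\<Sum>x\<in>c. pX p x * pmf (\<kappa> x) t) / (\<Sum>x\<in>c. pX p x * qT p \<kappa> t))"
proof -
  obtain x0 where x0: "c = piX p x0"
    using c by (auto simp: Xbar_def)
  define A where "A = (\<Sum>x\<in>c. pX p x * pmf (\<kappa> x) t)"
  define m where "m = class_mass p x0"
  have m: "0 < m" "(\<Sum>x\<in>c. pX p x) = m"
    using class_mass_pos[OF full, of x0] by (simp_all add: m_def class_mass_def x0)
  have "I_XT_term p (class_avg p \<kappa>) x t = pX p x * (A / m * ln (A / m / qT p \<kappa> t))" if "x \<in> c" for x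
  proof -
    have "class_avg p \<kappa> x = class_avg p \<kappa> x0"
      using that by (simp add: class_avg_def x0 mem_piX_iff)
    then have "pmf (class_avg p \<kappa> x) t = A / m"
      by (simp add: pmf_class_avg[OF full] A_def m_def x0)
    then show ?thesis
      using pX_pos[OF full, of x] by (simp add: I_XT_term_def qT_class_avg[OF full])
  qed
  then have "(\<Sum>x\<in>c. I_XT_term p (class_avg p \<kappa>) x t) = (\<Sum>x\<in>c. pX p x * (A / m * ln (A / m / qT p \<kappa> t)))"
    by (rule sum.cong[OF refl])
  also have "\<dots> = m * (A / m * ln (A / m / qT p \<kappa> t))"
    by (simp only: sum_distrib_right[symmetric] m(2))
  also have "\<dots> = A * ln (A / (m * qT p \<kappa> t))"
    using m by (simp add: divide_divide_eq_left)
  also have "m * qT p \<kappa> t = (\<Sum>x\<in>c. pX p x * qT p \<kappa> t)"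
    by (simp only: sum_distrib_right[symmetric] m(2))
  finally show ?thesis
    unfolding A_def .
qed

definition avg_gap :: "('x::finite \<times> 'y) pmf \<Rightarrow> ('x \<Rightarrow> nat pmf) \<Rightarrow> 'x set \<Rightarrow> nat \<Rightarrow> real" where
  "avg_gap p \<kappa> c t = (\<Sum>x\<in>c. I_XT_term p \<kappa> x t) - (\<Sum>x\<in>c. I_XT_term p (class_avg p \<kappa>) x t)"

text \<open>On a class \<open>c\<close>, \<open>avg_gap\<close> is the defect of the log-sum inequality for
  \<open>a x = p(x) \<kappa>(t|x)\<close> and \<open>b x = p(x) q(t)\<close>.\<close>
lemma avg_gap:
  fixes p :: "('x::finite \<times> 'y) pmf"
  assumes full: "set_pmf (map_pmf fst p) = UNIV" and c: "c \<in> Xbar p"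
  shows avg_gap_nonneg: "0 \<le> avg_gap p \<kappa> c t"
    and avg_gap_eq_0_iff: "avg_gap p \<kappa> c t = 0 \<longleftrightarrow>
      (\<forall>x\<in>c. pX p x * pmf (\<kappa> x) t * (\<Sum>x'\<in>c. pX p x' * qT p \<kappa> t) =
               pX p x * qT p \<kappa> t * (\<Sum>x'\<in>c. pX p x' * pmf (\<kappa> x') t))"
proof -
  define a where "a x = pX p x * pmf (\<kappa> x) t" for x
  define b where "b x = pX p x * qT p \<kappa> t" for x
  have ab: "0 \<le> a x" "0 \<le> b x" for x
    by (simp_all add: a_def b_def pX_nonneg qT_nonneg)
  have supp: "0 < b x" if "0 < a x" for x
    using that pX_mult_le_qT[of p x \<kappa> t] pX_pos[OF full, of x] by (simp add: a_def b_def)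
  have gap: "avg_gap p \<kappa> c t = (\<Sum>x\<in>c. a x * ln (a x / b x)) - sum a c * ln (sum a c / sum b c)"
    unfolding avg_gap_def sum_I_XT_term_class_avg[OF full c] unfolding I_XT_term_def a_def b_def ..
  show "0 \<le> avg_gap p \<kappa> c t"
    unfolding gap using log_sum_inequality[of c a b] ab supp by simp
  show "avg_gap p \<kappa> c t = 0 \<longleftrightarrow>
      (\<forall>x\<in>c. pX p x * pmf (\<kappa> x) t * (\<Sum>x'\<in>c. pX p x' * qT p \<kappa> t) =
               pX p x * qT p \<kappa> t * (\<Sum>x'\<in>c. pX p x' * pmf (\<kappa> x') t))"
    unfolding gap using log_sum_eq_iff[of c a b] ab supp by (simp add: a_def b_def)
qed

lemma avg_gap_summable_on: "avg_gap p \<kappa> c summable_on A"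
  for c :: "'x::finite set"
  unfolding avg_gap_def[abs_def]
  by (intro summable_on_diff summable_on_sum I_XT_term_summable_on) simp_all

lemma I_XT_minus_I_XT_class_avg:
  fixes p :: "('x::finite \<times> 'y::finite) pmf"
  assumes full: "set_pmf (map_pmf fst p) = UNIV"
  shows "I_XT p \<kappa> - I_XT p (class_avg p \<kappa>) = (\<Sum>c\<in>Xbar p. infsum (avg_gap p \<kappa> c) UNIV)"
proof -
  have by_class: "I_XT p \<kappa>' = (\<Sum>c\<in>Xbar p. infsum (\<lambda>t. \<Sum>x\<in>c. I_XT_term p \<kappa>' x t) UNIV)" for \<kappa>'
    unfolding I_XT_eq_sum sum_by_classes[of _ p]
    by (simp add: infsum_sum I_XT_term_summable_on)
  have "infsum (avg_gap p \<kappa> c) UNIV = infsum (\<lambda>t. \<Sum>x\<in>c. I_XT_term p \<kappa> x t) UNIV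
      - infsum (\<lambda>t. \<Sum>x\<in>c. I_XT_term p (class_avg p \<kappa>) x t) UNIV" for c
    unfolding avg_gap_def[abs_def]
    by (intro infsum_diff summable_on_sum I_XT_term_summable_on) simp_all
  then show ?thesis
    unfolding by_class by (simp add: sum_subtractf)
qed

lemma I_XT_class_avg_le:
  fixes p :: "('x::finite \<times> 'y::finite) pmf"
  assumes full: "set_pmf (map_pmf fst p) = UNIV"
  shows "I_XT p (class_avg p \<kappa>) \<le> I_XT p \<kappa>"
proof -
  have "0 \<le> (\<Sum>c\<in>Xbar p. infsum (avg_gap p \<kappa> c) UNIV)"
    by (intro sum_nonneg infsum_nonneg) (simp add: avg_gap_nonneg[OF full])
  then show ?thesis
    using I_XT_minus_I_XT_class_avg[OF full, of \<kappa>] by linarith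
qed

lemma avg_gap_eq_0_if_I_XT_le:
  fixes p :: "('x::finite \<times> 'y::finite) pmf"
  assumes full: "set_pmf (map_pmf fst p) = UNIV" and le: "I_XT p \<kappa> \<le> I_XT p (class_avg p \<kappa>)"
    and c: "c \<in> Xbar p"
  shows "avg_gap p \<kappa> c t = 0"
proof -
  have "(\<Sum>c\<in>Xbar p. infsum (avg_gap p \<kappa> c) UNIV) = 0"
    using I_XT_minus_I_XT_class_avg[OF full, of \<kappa>] I_XT_class_avg_le[OF full, of \<kappa>] le by linarith
  then have "infsum (avg_gap p \<kappa> c) UNIV = 0"
    using c by (simp add: sum_nonneg_eq_0_iff infsum_nonneg avg_gap_nonneg[OF full])
  then show ?thesis
    using c by (simp add: infsum_nonneg_eq_0_iff avg_gap_summable_on avg_gap_nonneg[OF full])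
qed

lemma class_avg_eq_if_I_XT_le:
  fixes p :: "('x::finite \<times> 'y::finite) pmf"
  assumes full: "set_pmf (map_pmf fst p) = UNIV" and le: "I_XT p \<kappa> \<le> I_XT p (class_avg p \<kappa>)"
  shows "class_avg p \<kappa> = \<kappa>"
proof (intro ext pmf_eqI)
  fix x t
  define A where "A = (\<Sum>x'\<in>piX p x. pX p x' * pmf (\<kappa> x') t)"
  have "avg_gap p \<kappa> (piX p x) t = 0"
    by (rule avg_gap_eq_0_if_I_XT_le[OF full le]) (simp add: Xbar_def)
  then have eq: "pX p x * pmf (\<kappa> x) t * (class_mass p x * qT p \<kappa> t) = pX p x * qT p \<kappa> t * A"
    by (simp add: avg_gap_eq_0_iff[OF full] Xbar_def A_def class_mass_def sum_distrib_right piX_def)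
  have avg: "pmf (class_avg p \<kappa> x) t = A / class_mass p x"
    by (simp add: pmf_class_avg[OF full] A_def)
  have pos: "0 < pX p x" "0 < class_mass p x"
    using pX_pos[OF full] class_mass_pos[OF full] by auto
  show "pmf (class_avg p \<kappa> x) t = pmf (\<kappa> x) t"
  proof (cases "qT p \<kappa> t = 0")
    case True
    have "pmf (\<kappa>' x) t = 0" if "qT p \<kappa>' t = 0" for \<kappa>' :: "'x \<Rightarrow> nat pmf"
      using pX_mult_le_qT[of p x \<kappa>' t] pos pmf_nonneg[of "\<kappa>' x" t] that
      by (smt (verit) mult_pos_pos)
    then show ?thesis
      using True qT_class_avg[OF full, of \<kappa>] by simp
  next
    case False
    then have "pmf (\<kappa> x) t * class_mass p x = A"
      using eq pos by (simp add: algebra_simps)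
    then show ?thesis
      unfolding avg using pos by auto
  qed
qed

definition class_entropy :: "('x::finite \<times> 'y) pmf \<Rightarrow> real" where
  "class_entropy p = (\<Sum>x\<in>UNIV. - (pX p x * ln (class_mass p x)))"

lemma I_XT_eq_class_entropy:
  fixes p :: "('x::finite \<times> 'y::finite) pmf"
  assumes full: "set_pmf (map_pmf fst p) = UNIV"
    and const: "constant_on_fibres (piX p) \<kappa>" and sep: "separates_fibres (piX p) \<kappa>"
  shows "I_XT p \<kappa> = class_entropy p"
proof -
  have summand: "I_XT_term p \<kappa> x t = - (pX p x * ln (class_mass p x)) * pmf (\<kappa> x) t" for x t
  proof (cases "t \<in> set_pmf (\<kappa> x)")
    case True
    have "pX p x' * pmf (\<kappa> x') t = (if x' \<in> piX p x then pX p x' * pmf (\<kappa> x) t else 0)" for x'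
    proof (cases "x' \<in> piX p x")
      case True
      then have "\<kappa> x' = \<kappa> x"
        using const unfolding constant_on_fibres_def mem_piX_iff by blast
      then show ?thesis
        using True by simp
    next
      case False
      then have "t \<notin> set_pmf (\<kappa> x')"
        using sep \<open>t \<in> set_pmf (\<kappa> x)\<close> unfolding separates_fibres_def mem_piX_iff by blast
      then show ?thesis
        using False by (simp add: set_pmf_eq)
    qed
    then have "qT p \<kappa> t = class_mass p x * pmf (\<kappa> x) t"
      by (simp add: qT_def class_mass_def sum.If_cases sum_distrib_right)
    moreover have "0 < pX p x" "0 < class_mass p x" "0 < pmf (\<kappa> x) t"
      using pX_pos[OF full] class_mass_pos[OF full] True by (auto simp: pmf_positive)
    ultimately show ?thesis
      by (simp add: I_XT_term_def ln_div)
  qed (simp add: I_XT_term_def set_pmf_eq)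
  show ?thesis
    unfolding I_XT_eq_sum class_entropy_def summand infsum_cmult_right' infsum_pmf_UNIV by simp
qed

section \<open>The information bottleneck\<close>

lemma IB_class_avg_eq:
  fixes p :: "('x::finite \<times> 'y::finite) pmf"
  assumes full: "set_pmf (map_pmf fst p) = UNIV" and \<kappa>: "\<kappa> \<in> IB p lam"
  shows "class_avg p \<kappa> = \<kappa>"
proof (rule class_avg_eq_if_I_XT_le[OF full])
  have "lam \<le> I_TY p (class_avg p \<kappa>)"
    using \<kappa> by (simp add: IB_def I_TY_class_avg[OF full])
  then show "I_XT p \<kappa> \<le> I_XT p (class_avg p \<kappa>)"
    using \<kappa> by (simp add: IB_def)
qed

lemma IB_constant_on_fibres:
  fixes p :: "('x::finite \<times> 'y::finite) pmf"
  assumes "set_pmf (map_pmf fst p) = UNIV" and "\<kappa> \<in> IB p lam"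
  shows "constant_on_fibres (piX p) \<kappa>"
  using constant_on_fibres_class_avg[of p \<kappa>] IB_class_avg_eq[OF assms] by simp

lemma mem_IB_mutual_info_iff:
  fixes p :: "('x::finite \<times> 'y::finite) pmf"
  assumes full: "set_pmf (map_pmf fst p) = UNIV"
  shows "\<kappa> \<in> IB p (mutual_info p) \<longleftrightarrow> constant_on_fibres (piX p) \<kappa> \<and> separates_fibres (piX p) \<kappa>"
proof
  assume \<kappa>: "\<kappa> \<in> IB p (mutual_info p)"
  then have "I_TY p \<kappa> = mutual_info p"
    using I_TY_le_mutual_info[of p \<kappa>] by (simp add: IB_def)
  then show "constant_on_fibres (piX p) \<kappa> \<and> separates_fibres (piX p) \<kappa>"
    using IB_constant_on_fibres[OF full \<kappa>] I_TY_eq_mutual_info_iff[OF full] by simp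
next
  assume "constant_on_fibres (piX p) \<kappa> \<and> separates_fibres (piX p) \<kappa>"
  then have I_TY: "I_TY p \<kappa> = mutual_info p" and I_XT: "I_XT p \<kappa> = class_entropy p"
    using I_TY_eq_mutual_info_iff[OF full] I_XT_eq_class_entropy[OF full] by simp_all
  have "I_XT p \<kappa> \<le> I_XT p q" if q: "mutual_info p \<le> I_TY p q" for q
  proof -
    have "I_TY p (class_avg p q) = mutual_info p"
      using q I_TY_le_mutual_info[of p q] by (simp add: I_TY_class_avg[OF full])
    then have "I_XT p (class_avg p q) = class_entropy p"
      using I_TY_eq_mutual_info_iff[OF full] I_XT_eq_class_entropy[OF full constant_on_fibres_class_avg]
      by simp
    then show ?thesis
      using I_XT I_XT_class_avg_le[OF full, of q] by simp
  qed
  then show "\<kappa> \<in> IB p (mutual_info p)"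
    by (simp add: IB_def I_TY)
qed

lemma Gci_iff: "\<sigma> \<in> Gci p \<longleftrightarrow> bij \<sigma> \<and> (\<forall>x. piX p (\<sigma> x) = piX p x)"
  unfolding Gci_def chan_comp_det_right piX_eq_iff by (auto simp: fun_eq_iff)

lemma chan_comp_det_eq_if_Gci:
  assumes "\<sigma> \<in> Gci p" and "constant_on_fibres (piX p) \<kappa>"
  shows "chan_comp \<kappa> (det \<sigma>) = \<kappa>"
  using assms unfolding Gci_iff constant_on_fibres_def chan_comp_det_right by blast

lemma Gci_if_chan_comp_det_eq:
  assumes "bij \<sigma>" and sep: "separates_fibres (piX p) \<kappa>" and inv: "chan_comp \<kappa> (det \<sigma>) = \<kappa>"
  shows "\<sigma> \<in> Gci p"
proof -
  have "piX p (\<sigma> x) = piX p x" for x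
  proof -
    obtain t where "t \<in> set_pmf (\<kappa> x)"
      using set_pmf_not_empty by fast
    moreover have "\<kappa> (\<sigma> x) = \<kappa> x"
      using fun_cong[OF inv, of x] by (simp add: chan_comp_det_right)
    ultimately show ?thesis
      using sep unfolding separates_fibres_def by metis
  qed
  then show ?thesis
    using assms(1) by (simp add: Gci_iff)
qed

lemma piX_eq_pi_ci: "piX p = pi_ci p"
proof (intro ext set_eqI iffI)
  fix x x'
  assume "x' \<in> piX p x"
  then have "piX p x' = piX p x"
    by (simp add: mem_piX_iff)
  then have "Transposition.transpose x x' \<in> Gci p"
    by (simp add: Gci_iff Transposition.transpose_def)
  then show "x' \<in> pi_ci p x"
    unfolding pi_ci_def by (intro CollectI exI[of _ "Transposition.transpose x x'"]) simp
next
  fix x x'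
  assume "x' \<in> pi_ci p x"
  then show "x' \<in> piX p x"
    by (auto simp: pi_ci_def Gci_iff mem_piX_iff)
qed

theorem theorem1:
  fixes p :: "('x::finite \<times> 'y::finite) pmf" and \<sigma> :: "'x \<Rightarrow> 'x"
  assumes full: "set_pmf (map_pmf fst p) = UNIV"
    and bij: "bij \<sigma>"
  shows
    "IB p (mutual_info p) =
       {chan_comp \<gamma> (det (piX p)) | \<gamma> :: 'x set \<Rightarrow> nat pmf. congruent_chan (Xbar p) \<gamma>}
     \<and> (\<forall>\<kappa>\<in>IB p (mutual_info p). \<sigma> \<in> Gci p \<longleftrightarrow> chan_comp \<kappa> (det \<sigma>) = \<kappa>)
     \<and> (\<sigma> \<in> Gci p \<longrightarrow>
          (\<forall>lam. 0 \<le> lam \<and> lam \<le> mutual_info p \<longrightarrow>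
             (\<forall>\<kappa>\<in>IB p lam. chan_comp \<kappa> (det \<sigma>) = \<kappa>)))
     \<and> piX p = pi_ci p"
proof (intro conjI)
  show "IB p (mutual_info p) =
       {chan_comp \<gamma> (det (piX p)) | \<gamma> :: 'x set \<Rightarrow> nat pmf. congruent_chan (Xbar p) \<gamma>}"
    using mem_IB_mutual_info_iff[OF full] congruent_factorization_iff[of "piX p"]
    unfolding Xbar_def by blast
  show "\<forall>\<kappa>\<in>IB p (mutual_info p). \<sigma> \<in> Gci p \<longleftrightarrow> chan_comp \<kappa> (det \<sigma>) = \<kappa>"
    using chan_comp_det_eq_if_Gci Gci_if_chan_comp_det_eq[OF bij] mem_IB_mutual_info_iff[OF full] by blast
  show "\<sigma> \<in> Gci p \<longrightarrow> (\<forall>lam. 0 \<le> lam \<and> lam \<le> mutual_info p \<longrightarrow>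
          (\<forall>\<kappa>\<in>IB p lam. chan_comp \<kappa> (det \<sigma>) = \<kappa>))"
    using chan_comp_det_eq_if_Gci IB_constant_on_fibres[OF full] by blast
  show "piX p = pi_ci p"
    by (rule piX_eq_pi_ci)
qed

end
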